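(* There is at most one sequence $(A_k(q))_{k\geq0}$ of power series in $q$ satisfying: (a) each $A_k$ is a quasi-modular form of weight $2k$ and $\frac{d}{dG_2}A_k=2A_{k-1}$ (where $A_{-1}:=0$); (b) for every $n\geq0$ there exists a polynomial $p_n(k)$ of degree $2n$ such that for every $k\geq n$, $\big[A_k(q)\big]_{q^n}=\frac{1}{(-4)^k(2k+1)!!}\,p_n(k)$; (c) $A_0=1+O(q)$.
   Context: For even $k\geq 2$, $G_k(q)=-\frac{B_k}{2k}+\sum_{n\geq1}\sum_{d|n}d^{k-1}q^n$ ($B_k$ Bernoulli numbers). The algebra of quasi-modular forms is $\mathsf{QMod}=\mathbb{C}[G_2,G_4,G_6]$ (a free polynomial algebra), graded by weight with $G_k$ of weight $k$, viewed inside power series in $q$; $\frac{d}{dG_2}$ is the partial derivative with respect to the generator $G_2$. $[f]_{q^n}$ denotes the $q^n$-coefficient and $(2k+1)!!=(2k+1)(2k-1)\cdots3\cdot1$. *)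

theory Defs
  imports "HOL-Computational_Algebra.Computational_Algebra"
begin

text \<open>Bernoulli numbers (convention B_1 = -1/2; only even indices are used),
  via the standard recursion sum over j from 0 to n of binomial(n+1,j) B_j = 0 for n > 0.\<close>
fun bernoulli :: "nat \<Rightarrow> real" where
  "bernoulli n = (if n = 0 then 1
     else - (\<Sum>j<n. real (Suc n choose j) * bernoulli j) / real (Suc n))"

definition eisenstein_G :: "nat \<Rightarrow> complex fps" where
  "eisenstein_G k = Abs_fps (\<lambda>n. if n = 0 then - of_real (bernoulli k) / (2 * of_nat k)
                                else (\<Sum>d | d dvd n. of_nat d ^ (k - 1)))"

text \<open>Exponent triples (a,b,c) of monomials G_2^a G_4^b G_6^c of weight 2k,
  i.e. 2a + 4b + 6c = 2k.\<close>
definition wt_monos :: "nat \<Rightarrow> (nat \<times> nat \<times> nat) set" where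
  "wt_monos k = {(a, b, c). a + 2 * b + 3 * c = k}"

definition qm_eval :: "nat \<Rightarrow> (nat \<Rightarrow> nat \<Rightarrow> nat \<Rightarrow> complex) \<Rightarrow> complex fps" where
  "qm_eval k P = (\<Sum>(a, b, c)\<in>wt_monos k.
      fps_const (P a b c) * eisenstein_G 2 ^ a * eisenstein_G 4 ^ b * eisenstein_G 6 ^ c)"

definition odd_dfact :: "nat \<Rightarrow> nat" where
  "odd_dfact k = (\<Prod>i\<le>k. 2 * i + 1)"

end

theory Submission
  imports Defs
begin

(* Idea: the difference D_k = A_k - A'_k again satisfies (a) and (b), and [D_0]_{q^0} = 0.
  Integrating d/dG_2 D_k = 2 D_(k-1) gives D_k = sum_a (2 G_2)^a / a! * F_(k-a), where F_m is a
  polynomial in G_4, G_6 of weight 2m, i.e. a modular form. Induction on n shows that every F_m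
  vanishes to order > n. If all F_m vanish to order n, the Sturm bound kills F_m for m < 6n, so
  [D_k]_{q^n} = 0 for the 5n values n <= k < 6n (for n = 0 use k = 0 and (c)). The polynomial of
  degree 2n in (b) therefore vanishes, so [D_k]_{q^n} = 0 for all k; as [D_k]_{q^n} is a
  convolution of ([F_m]_{q^n})_m with a sequence starting with 1, all [F_m]_{q^n} vanish. *)

lemma fps_mult_nth_if_low_coeffs_eq_0:
  fixes f g :: "'a::comm_semiring_1 fps"
  assumes "\<And>i. i < n \<Longrightarrow> g $ i = 0"
  shows "(f * g) $ n = f $ 0 * g $ n"
proof -
  have "(f * g) $ n = (\<Sum>i=0..n. f $ i * g $ (n - i))"
    by (rule fps_mult_nth)
  also have "\<dots> = (\<Sum>i\<in>{0}. f $ i * g $ (n - i))"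
    by (rule sum.mono_neutral_right) (auto simp: assms)
  finally show ?thesis
    by simp
qed

lemma fps_triangular_combination_eq_0:
  fixes X :: "nat \<Rightarrow> 'a::idom fps"
  assumes X: "\<And>i. i \<le> I \<Longrightarrow> X i \<noteq> 0 \<and> subdegree (X i) = i"
    and low: "\<And>j. j \<le> I \<Longrightarrow> (\<Sum>i\<le>I. fps_const (s i) * X i) $ j = 0"
    and "i \<le> I"
  shows "s i = 0"
  using \<open>i \<le> I\<close>
proof (induction i rule: less_induct)
  case (less j)
  have "(\<Sum>i\<le>I. s i * X i $ j) = (\<Sum>i\<in>{j}. s i * X i $ j)"
  proof (rule sum.mono_neutral_right)
    show "\<forall>i\<in>{..I} - {j}. s i * X i $ j = 0"
      using less X by (metis Diff_iff atMost_iff insertCI linorder_neqE_nat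
        mult_eq_0_iff nth_less_subdegree_zero)
  qed (use less.prems in auto)
  then have "s j * X j $ j = 0"
    using low[OF less.prems] by (simp add: fps_sum_nth)
  moreover have "X j $ j \<noteq> 0"
    using X[OF less.prems] by (metis nth_subdegree_nonzero)
  ultimately show "s j = 0"
    by simp
qed

lemma convolution_eq_0_imp_eq_0:
  fixes c f :: "nat \<Rightarrow> 'a::idom"
  assumes "c 0 \<noteq> 0" and "\<And>k. (\<Sum>a\<le>k. c a * f (k - a)) = 0"
  shows "f m = 0"
proof -
  have "Abs_fps c * Abs_fps f = 0"
    by (rule fps_ext) (simp add: fps_mult_nth atLeast0AtMost assms(2))
  moreover have "Abs_fps c \<noteq> 0"
    using assms(1) by (metis fps_zero_nth fps_nth_Abs_fps)
  ultimately have "Abs_fps f = 0"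
    by simp
  then show ?thesis
    by (metis fps_zero_nth fps_nth_Abs_fps)
qed

definition modular_monos :: "nat \<Rightarrow> (nat \<times> nat) set" where
  "modular_monos m = {(b, c). 2 * b + 3 * c = m}"

lemma finite_modular_monos: "finite (modular_monos m)"
  by (rule finite_subset[of _ "{..m} \<times> {..m}"]) (auto simp: modular_monos_def)

(* For x = E_4 and y = E_6 normalised to constant term 1, y^2 - x^3 = -1728 Delta, and
  modular_basis m x y i = E_4^a E_6^e Delta^i (up to a constant) is the element of weight 2m
  vanishing to order exactly i. *)
definition modular_basis :: "nat \<Rightarrow> 'a::comm_ring_1 \<Rightarrow> 'a \<Rightarrow> nat \<Rightarrow> 'a" where
  "modular_basis m x y i = x ^ ((m - 3 * (m mod 2)) div 2 - 3 * i) * y ^ (m mod 2) * (y\<^sup>2 - x ^ 3) ^ i"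

lemma monomial_eq_sum_modular_basis:
  fixes x y :: "'a::comm_ring_1"
  assumes "(b, c) \<in> modular_monos m"
  shows "x ^ b * y ^ c = (\<Sum>i\<le>m div 6. of_nat (c div 2 choose i) * modular_basis m x y i)"
proof -
  define h where "h = c div 2"
  define e where "e = m mod 2"
  have c: "c = e + 2 * h"
    unfolding e_def h_def using assms by (simp add: modular_monos_def) presburger
  have b: "b + 3 * h = (m - 3 * e) div 2"
    using assms c by (simp add: modular_monos_def)
  have "x ^ b * y ^ c = x ^ b * y ^ e * ((y\<^sup>2 - x ^ 3) + x ^ 3) ^ h"
    by (simp add: c power_add power_mult)
  also have "\<dots> = x ^ b * y ^ e * (\<Sum>i\<le>h. of_nat (h choose i) * (y\<^sup>2 - x ^ 3) ^ i * (x ^ 3) ^ (h - i))"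
    by (simp only: binomial_ring)
  also have "\<dots> = (\<Sum>i\<le>h. of_nat (h choose i) * (x ^ b * (x ^ 3) ^ (h - i) * y ^ e * (y\<^sup>2 - x ^ 3) ^ i))"
    by (simp add: sum_distrib_left mult_ac)
  also have "\<dots> = (\<Sum>i\<le>h. of_nat (h choose i) * modular_basis m x y i)"
  proof (rule sum.cong)
    fix i assume "i \<in> {..h}"
    then have "b + 3 * (h - i) = (m - 3 * e) div 2 - 3 * i"
      using b by auto
    then show "of_nat (h choose i) * (x ^ b * (x ^ 3) ^ (h - i) * y ^ e * (y\<^sup>2 - x ^ 3) ^ i)
        = of_nat (h choose i) * modular_basis m x y i"
      by (simp add: modular_basis_def e_def flip: power_mult power_add)
  qed simp
  also have "\<dots> = (\<Sum>i\<le>m div 6. of_nat (h choose i) * modular_basis m x y i)"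
  proof (rule sum.mono_neutral_left)
    show "{..h} \<subseteq> {..m div 6}"
      using assms c by (auto simp: modular_monos_def)
  qed (auto simp: binomial_eq_0)
  finally show ?thesis
    by (simp add: h_def)
qed

lemma sum_modular_monos_eq_sum_modular_basis:
  fixes x y :: "'a::comm_ring_1 fps"
  shows "(\<Sum>(b, c)\<in>modular_monos m. fps_const (r b c) * (x ^ b * y ^ c))
    = (\<Sum>i\<le>m div 6. fps_const (\<Sum>(b, c)\<in>modular_monos m. r b c * of_nat (c div 2 choose i))
        * modular_basis m x y i)"
proof (rule fps_ext)
  fix j
  have "(\<Sum>(b, c)\<in>modular_monos m. fps_const (r b c) * (x ^ b * y ^ c)) $ j
      = (\<Sum>(b, c)\<in>modular_monos m. \<Sum>i\<le>m div 6. r b c * of_nat (c div 2 choose i) * modular_basis m x y i $ j)"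
    unfolding fps_sum_nth
    by (rule sum.cong) (auto simp: monomial_eq_sum_modular_basis fps_sum_nth sum_distrib_left
        mult.assoc simp flip: fps_of_nat)
  also have "\<dots> = (\<Sum>i\<le>m div 6. \<Sum>(b, c)\<in>modular_monos m. r b c * of_nat (c div 2 choose i) * modular_basis m x y i $ j)"
    unfolding case_prod_beta by (rule sum.swap)
  also have "\<dots> = (\<Sum>i\<le>m div 6. fps_const (\<Sum>(b, c)\<in>modular_monos m. r b c * of_nat (c div 2 choose i))
      * modular_basis m x y i) $ j"
    by (simp add: fps_sum_nth sum_distrib_right case_prod_beta)
  finally show "(\<Sum>(b, c)\<in>modular_monos m. fps_const (r b c) * (x ^ b * y ^ c)) $ j
      = (\<Sum>i\<le>m div 6. fps_const (\<Sum>(b, c)\<in>modular_monos m. r b c * of_nat (c div 2 choose i))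
        * modular_basis m x y i) $ j" .
qed

lemma subdegree_modular_basis:
  fixes x y :: "'a::idom fps"
  assumes "x $ 0 \<noteq> 0" "y $ 0 \<noteq> 0" "subdegree (y\<^sup>2 - x ^ 3) = 1"
  shows "modular_basis m x y i \<noteq> 0 \<and> subdegree (modular_basis m x y i) = i"
proof -
  have "x \<noteq> 0" "y \<noteq> 0" "y\<^sup>2 - x ^ 3 \<noteq> 0"
    using assms by auto
  with assms show ?thesis
    unfolding modular_basis_def by (simp del: subdegree_minus_commute)
qed

declare bernoulli.simps [simp del]

lemma bernoulli_0: "bernoulli 0 = 1"
  by (subst bernoulli.simps) simp

lemma bernoulli_Suc:
  "bernoulli (Suc n) = - (\<Sum>j\<le>n. real (Suc (Suc n) choose j) * bernoulli j) / real (Suc (Suc n))"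
  by (subst bernoulli.simps) (simp add: lessThan_Suc_atMost)

lemma bernoulli_4: "bernoulli 4 = - 1 / 30"
  and bernoulli_6: "bernoulli 6 = 1 / 42"
  by (simp_all add: bernoulli_Suc bernoulli_0 numeral_eq_Suc)

lemma eisenstein_G_nth_0: "eisenstein_G k $ 0 = - of_real (bernoulli k) / (2 * of_nat k)"
  by (simp add: eisenstein_G_def)

lemma eisenstein_G_nth_1: "eisenstein_G k $ Suc 0 = 1"
  by (simp add: eisenstein_G_def)

definition eisenstein_E4 :: "complex fps" where
  "eisenstein_E4 = fps_const 240 * eisenstein_G 4"

definition eisenstein_E6 :: "complex fps" where
  "eisenstein_E6 = fps_const (- 504) * eisenstein_G 6"

lemma eisenstein_E4_nth: "eisenstein_E4 $ 0 = 1" "eisenstein_E4 $ Suc 0 = 240"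
  and eisenstein_E6_nth: "eisenstein_E6 $ 0 = 1" "eisenstein_E6 $ Suc 0 = - 504"
  by (simp_all add: eisenstein_E4_def eisenstein_E6_def eisenstein_G_nth_0 eisenstein_G_nth_1
      bernoulli_4 bernoulli_6)

lemma subdegree_discriminant: "subdegree (eisenstein_E6\<^sup>2 - eisenstein_E4 ^ 3) = 1"
proof (rule subdegreeI)
  show "(eisenstein_E6\<^sup>2 - eisenstein_E4 ^ 3) $ 1 \<noteq> 0"
    by (simp add: eisenstein_E4_nth eisenstein_E6_nth power2_eq_square power3_eq_cube)
  show "(eisenstein_E6\<^sup>2 - eisenstein_E4 ^ 3) $ i = 0" if "i < 1" for i
    using that by (simp add: eisenstein_E4_nth eisenstein_E6_nth fps_power_zeroth)
qed

definition modular_eval :: "nat \<Rightarrow> (nat \<Rightarrow> nat \<Rightarrow> complex) \<Rightarrow> complex fps" where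
  "modular_eval m R = (\<Sum>(b, c)\<in>modular_monos m.
      fps_const (R b c) * eisenstein_G 4 ^ b * eisenstein_G 6 ^ c)"

lemma modular_eval_eq_sum_E4_E6:
  "modular_eval m R = (\<Sum>(b, c)\<in>modular_monos m.
      fps_const (R b c * (1 / 240) ^ b * (- 1 / 504) ^ c) * (eisenstein_E4 ^ b * eisenstein_E6 ^ c))"
proof -
  have "eisenstein_G 4 = fps_const (1 / 240) * eisenstein_E4"
    and "eisenstein_G 6 = fps_const (- 1 / 504) * eisenstein_E6"
    by (simp_all add: eisenstein_E4_def eisenstein_E6_def flip: mult.assoc)
  then show ?thesis
    unfolding modular_eval_def by (simp add: power_mult_distrib mult_ac)
qed

lemma modular_eval_sturm_bound:
  assumes low: "\<And>j. j < n \<Longrightarrow> modular_eval m R $ j = 0" and "m < 6 * n"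
  shows "modular_eval m R = 0"
proof -
  define s where "s i = (\<Sum>(b, c)\<in>modular_monos m.
      R b c * (1 / 240) ^ b * (- 1 / 504) ^ c * of_nat (c div 2 choose i))" for i
  have eval: "modular_eval m R
      = (\<Sum>i\<le>m div 6. fps_const (s i) * modular_basis m eisenstein_E4 eisenstein_E6 i)"
    unfolding modular_eval_eq_sum_E4_E6 sum_modular_monos_eq_sum_modular_basis s_def ..
  have "m div 6 < n"
    using \<open>m < 6 * n\<close> by auto
  have "s i = 0" if "i \<le> m div 6" for i
  proof (rule fps_triangular_combination_eq_0[OF _ _ that])
    show "modular_basis m eisenstein_E4 eisenstein_E6 i \<noteq> 0
        \<and> subdegree (modular_basis m eisenstein_E4 eisenstein_E6 i) = i" for i
      by (rule subdegree_modular_basis[OF _ _ subdegree_discriminant])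
        (simp_all add: eisenstein_E4_nth eisenstein_E6_nth)
    show "(\<Sum>i\<le>m div 6. fps_const (s i) * modular_basis m eisenstein_E4 eisenstein_E6 i) $ j = 0"
      if "j \<le> m div 6" for j
      unfolding eval[symmetric] using that \<open>m div 6 < n\<close> by (intro low) simp
  qed
  then show ?thesis
    by (simp add: eval)
qed


lemma poly_quotient_eq_0_if_many_zeros:
  fixes r :: "'a::field_char_0 poly"
  assumes "degree r \<le> d" and f: "\<And>k. n \<le> k \<Longrightarrow> f k = poly r (of_nat k) / w k"
    and "\<And>k. w k \<noteq> 0"
    and "finite K" "d < card K" and K: "\<And>k. k \<in> K \<Longrightarrow> n \<le> k \<and> f k = 0"
    and "n \<le> k"
  shows "f k = 0"
proof -
  have "r = 0"
  proof (rule poly_eqI_degree[where A = "of_nat ` K"])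
    show "poly r x = poly 0 x" if "x \<in> of_nat ` K" for x
      using that K f assms(3) by force
    have "card (of_nat ` K :: 'a set) = card K"
      by (rule card_image) (simp add: inj_on_def)
    then show "degree r < card (of_nat ` K :: 'a set)" "degree 0 < card (of_nat ` K :: 'a set)"
      using assms(1,5) by simp_all
  qed
  then show ?thesis
    using f[OF \<open>n \<le> k\<close>] by simp
qed

(* With f_k = qm_eval k (Q k), this is the relation d/dG_2 f_k = t f_(k-1), read off coefficientwise. *)
definition dG2_relation :: "complex \<Rightarrow> (nat \<Rightarrow> nat \<Rightarrow> nat \<Rightarrow> nat \<Rightarrow> complex) \<Rightarrow> bool" where
  "dG2_relation t Q \<longleftrightarrow> (\<forall>k a b c. 1 \<le> k \<longrightarrow> (a, b, c) \<in> wt_monos (k - 1) \<longrightarrow>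
      of_nat (a + 1) * Q k (a + 1) b c = t * Q (k - 1) a b c)"

lemma wt_monos_eq_Sigma: "wt_monos k = (SIGMA a:{..k}. modular_monos (k - a))"
  by (auto simp: wt_monos_def modular_monos_def)

lemma qm_eval_diff: "qm_eval k P - qm_eval k P' = qm_eval k (\<lambda>a b c. P a b c - P' a b c)"
  unfolding qm_eval_def
  by (simp add: case_prod_beta algebra_simps flip: sum_subtractf fps_const_sub)

lemma qm_coeff_eq_G2_free_coeff:
  assumes "dG2_relation t Q" and "(a, b, c) \<in> wt_monos k"
  shows "Q k a b c = t ^ a / fact a * Q (k - a) 0 b c"
  using assms(2)
proof (induction a arbitrary: k)
  case (Suc a)
  then have "k \<ge> 1" and mono: "(a, b, c) \<in> wt_monos (k - 1)"
    by (auto simp: wt_monos_def)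
  then have "Q k (Suc a) b c = t / of_nat (Suc a) * Q (k - 1) a b c"
    using assms(1) unfolding dG2_relation_def by (simp add: field_simps del: of_nat_Suc)
  also have "\<dots> = t ^ Suc a / fact (Suc a) * Q (k - Suc a) 0 b c"
    using Suc.IH[OF mono] by (simp add: field_simps del: of_nat_Suc)
  finally show ?case .
qed simp

lemma qm_eval_G2_expansion:
  assumes "dG2_relation t Q"
  shows "qm_eval k (Q k) = (\<Sum>a\<le>k. fps_const (t ^ a / fact a) * eisenstein_G 2 ^ a
      * modular_eval (k - a) (Q (k - a) 0))"
proof -
  have "qm_eval k (Q k) = (\<Sum>(a, bc)\<in>(SIGMA a:{..k}. modular_monos (k - a)).
      fps_const (t ^ a / fact a) * eisenstein_G 2 ^ a *
      (case bc of (b, c) \<Rightarrow> fps_const (Q (k - a) 0 b c) * eisenstein_G 4 ^ b * eisenstein_G 6 ^ c))"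
    unfolding qm_eval_def wt_monos_eq_Sigma[symmetric]
  proof (rule sum.cong)
    fix x assume "x \<in> wt_monos k"
    moreover obtain a b c where "x = (a, b, c)"
      by (cases x) auto
    ultimately show "(case x of (a, b, c) \<Rightarrow> fps_const (Q k a b c) * eisenstein_G 2 ^ a
          * eisenstein_G 4 ^ b * eisenstein_G 6 ^ c)
        = (case x of (a, bc) \<Rightarrow> fps_const (t ^ a / fact a) * eisenstein_G 2 ^ a *
          (case bc of (b, c) \<Rightarrow> fps_const (Q (k - a) 0 b c) * eisenstein_G 4 ^ b * eisenstein_G 6 ^ c))"
      using qm_coeff_eq_G2_free_coeff[OF assms] by (simp add: mult_ac)
  qed simp
  also have "\<dots> = (\<Sum>a\<le>k. \<Sum>bc\<in>modular_monos (k - a). fps_const (t ^ a / fact a) * eisenstein_G 2 ^ a *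
      (case bc of (b, c) \<Rightarrow> fps_const (Q (k - a) 0 b c) * eisenstein_G 4 ^ b * eisenstein_G 6 ^ c))"
    by (subst sum.Sigma) (auto simp: finite_modular_monos)
  also have "\<dots> = (\<Sum>a\<le>k. fps_const (t ^ a / fact a) * eisenstein_G 2 ^ a
      * modular_eval (k - a) (Q (k - a) 0))"
    by (simp add: modular_eval_def sum_distrib_left case_prod_beta)
  finally show ?thesis .
qed

lemma qm_eval_nth_eq_convolution:
  assumes "dG2_relation t Q" and "\<And>i m. i < n \<Longrightarrow> modular_eval m (Q m 0) $ i = 0"
  shows "qm_eval k (Q k) $ n = (\<Sum>a\<le>k. t ^ a / fact a * (eisenstein_G 2 $ 0) ^ a
      * modular_eval (k - a) (Q (k - a) 0) $ n)"
  using assms(2)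
  by (simp add: qm_eval_G2_expansion[OF assms(1)] fps_sum_nth fps_mult_nth_if_low_coeffs_eq_0
      fps_power_zeroth)

lemma qm_eval_nth_eq_0:
  fixes w :: "nat \<Rightarrow> complex"
  assumes dG2: "dG2_relation t Q"
    and coeff_poly: "\<exists>r :: complex poly. degree r \<le> 2 * n \<and>
      (\<forall>k\<ge>n. qm_eval k (Q k) $ n = poly r (of_nat k) / w k)"
    and w: "\<And>k. w k \<noteq> 0"
    and const: "qm_eval 0 (Q 0) $ 0 = 0"
    and low: "\<And>i m. i < n \<Longrightarrow> modular_eval m (Q m 0) $ i = 0"
  shows "qm_eval k (Q k) $ n = 0"
proof -
  have sturm: "qm_eval k (Q k) $ n = 0" if "k < 6 * n" for k
  proof -
    have "modular_eval (k - a) (Q (k - a) 0) = 0" for a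
      using low that by (intro modular_eval_sturm_bound[of n]) auto
    then show ?thesis
      by (simp add: qm_eval_nth_eq_convolution[OF dG2 low])
  qed
  obtain r where deg: "degree r \<le> 2 * n"
    and r: "\<And>k. k \<ge> n \<Longrightarrow> qm_eval k (Q k) $ n = poly r (of_nat k) / w k"
    using coeff_poly by blast
  obtain K where K: "finite K" "2 * n < card K"
    "\<And>k. k \<in> K \<Longrightarrow> n \<le> k \<and> qm_eval k (Q k) $ n = 0"
  proof (cases "n = 0")
    case True
    then show thesis
      using that[of "{0}"] const by simp
  next
    case False
    then show thesis
      using that[of "{n..<6 * n}"] sturm by auto
  qed
  show ?thesis
  proof (cases "n \<le> k")
    case True
    show ?thesis
      by (rule poly_quotient_eq_0_if_many_zeros[where f = "\<lambda>k. qm_eval k (Q k) $ n", OF deg r w K True])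
  next
    case False
    then show ?thesis
      by (intro sturm) linarith
  qed
qed

lemma qm_sequence_eq_0:
  fixes w :: "nat \<Rightarrow> complex"
  assumes dG2: "dG2_relation t Q"
    and coeff_poly: "\<And>n. \<exists>r :: complex poly. degree r \<le> 2 * n \<and>
      (\<forall>k\<ge>n. qm_eval k (Q k) $ n = poly r (of_nat k) / w k)"
    and w: "\<And>k. w k \<noteq> 0"
    and const: "qm_eval 0 (Q 0) $ 0 = 0"
  shows "qm_eval k (Q k) = 0"
proof -
  have "modular_eval m (Q m 0) $ n = 0" for m n
  proof (induction n arbitrary: m rule: less_induct)
    case (less n)
    have IH: "\<And>i m. i < n \<Longrightarrow> modular_eval m (Q m 0) $ i = 0"
      using less.IH .
    have vanish: "qm_eval k (Q k) $ n = 0" for k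
      by (rule qm_eval_nth_eq_0[OF dG2 coeff_poly w const IH])
    show ?case
    proof (rule convolution_eq_0_imp_eq_0[where f = "\<lambda>m. modular_eval m (Q m 0) $ n"
          and c = "\<lambda>a. t ^ a / fact a * (eisenstein_G 2 $ 0) ^ a"])
      show "t ^ 0 / fact 0 * (eisenstein_G 2 $ 0) ^ 0 \<noteq> 0"
        by simp
      show "(\<Sum>a\<le>k. t ^ a / fact a * (eisenstein_G 2 $ 0) ^ a
          * modular_eval (k - a) (Q (k - a) 0) $ n) = 0" for k
        using qm_eval_nth_eq_convolution[where n = n, OF dG2 IH] vanish[of k] by simp
    qed
  qed
  then have "modular_eval m (Q m 0) = 0" for m
    by (simp add: fps_ext)
  then show ?thesis
    by (simp add: qm_eval_G2_expansion[OF dG2])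
qed

lemma odd_dfact_pos: "odd_dfact k > 0"
  unfolding odd_dfact_def by (rule prod_pos) auto

theorem lemma3p2:
  fixes A A' :: "nat \<Rightarrow> complex fps"
    and P P' :: "nat \<Rightarrow> nat \<Rightarrow> nat \<Rightarrow> nat \<Rightarrow> complex"
  assumes qm: "\<And>k. A k = qm_eval k (P k)"
    and dG2: "\<And>k a b c. k \<ge> 1 \<Longrightarrow> (a, b, c) \<in> wt_monos (k - 1) \<Longrightarrow>
                 of_nat (a + 1) * P k (a + 1) b c = 2 * P (k - 1) a b c"
    and poly_coeff: "\<And>n. \<exists>p :: complex poly. degree p = 2 * n \<and>
                 (\<forall>k\<ge>n. fps_nth (A k) n
                    = poly p (of_nat k) / ((- 4) ^ k * of_nat (odd_dfact k)))"
    and const: "fps_nth (A 0) 0 = 1"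
    and qm': "\<And>k. A' k = qm_eval k (P' k)"
    and dG2': "\<And>k a b c. k \<ge> 1 \<Longrightarrow> (a, b, c) \<in> wt_monos (k - 1) \<Longrightarrow>
                 of_nat (a + 1) * P' k (a + 1) b c = 2 * P' (k - 1) a b c"
    and poly_coeff': "\<And>n. \<exists>p :: complex poly. degree p = 2 * n \<and>
                 (\<forall>k\<ge>n. fps_nth (A' k) n
                    = poly p (of_nat k) / ((- 4) ^ k * of_nat (odd_dfact k)))"
    and const': "fps_nth (A' 0) 0 = 1"
  shows "A = A'"
proof -
  define Q where "Q k = (\<lambda>a b c. P k a b c - P' k a b c)" for k
  have diff: "A k - A' k = qm_eval k (Q k)" for k
    by (simp add: qm qm' qm_eval_diff Q_def)
  have "qm_eval k (Q k) = 0" for k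
  proof (rule qm_sequence_eq_0[where w = "\<lambda>k. (- 4) ^ k * of_nat (odd_dfact k)"])
    show "dG2_relation 2 Q"
      using dG2 dG2' by (simp add: dG2_relation_def Q_def algebra_simps)
    show "\<exists>r. degree r \<le> 2 * n \<and> (\<forall>k\<ge>n. qm_eval k (Q k) $ n
        = poly r (of_nat k) / ((- 4) ^ k * of_nat (odd_dfact k)))" for n
    proof -
      obtain p p' where "degree p = 2 * n" "degree p' = 2 * n"
        and "\<forall>k\<ge>n. A k $ n = poly p (of_nat k) / ((- 4) ^ k * of_nat (odd_dfact k))"
        and "\<forall>k\<ge>n. A' k $ n = poly p' (of_nat k) / ((- 4) ^ k * of_nat (odd_dfact k))"
        using poly_coeff poly_coeff' by meson
      then show ?thesis
        using degree_diff_le_max[of p p']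
        by (intro exI[of _ "p - p'"]) (simp add: diff_divide_distrib flip: diff)
    qed
    show "(- 4) ^ k * of_nat (odd_dfact k) \<noteq> (0 :: complex)" for k
      using odd_dfact_pos[of k] by simp
    show "qm_eval 0 (Q 0) $ 0 = 0"
      using const const' by (simp flip: diff)
  qed
  then show ?thesis
    using diff by auto
qed

end
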